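(* Let $\Omega\subset\mathbb{R}^d$ be a bounded Lipschitz domain, $p\in(1,\infty)$, $\Phi$ satisfying (G), $(\rho_n)$ satisfying (A). Suppose that along some subsequence $(n_k)$ the functionals $\overline{F}_{n_k}(\cdot,\Omega)$ $\Gamma$-converge in the strong topology of $L^p(\Omega;\mathbb{R}^d)$ to a functional $\overline{F}_\infty$ with $\overline{F}_\infty(\mathbf{v})=\int_\Omega f_\infty(\nabla\mathbf{v})d\mathbf{x}$ for all $\mathbf{v}\in W^{1,p}(\Omega;\mathbb{R}^d)$, where $f_\infty:\mathbb{R}^{d\times d}\to\mathbb{R}$ is continuous. Then $f_\infty(\mathbb{U}\mathbb{F})=f_\infty(\mathbb{F})$ for all $\mathbb{F}\in\mathbb{R}^{d\times d}$ and $\mathbb{U}\in\mathcal{O}(d)$.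
   Context: (G): $\Phi:[0,\infty)\to[0,\infty)$ is nondecreasing and convex, with constants $C_0,C_1>0$ such that $C_0(a^p-1)\le\Phi(a)\le C_1(1+a^p)$ for all $a\ge0$, and $\Phi(a)=0$ iff $a=0$. (A): each $\rho_n:\mathbb{R}^d\to[0,\infty)$ is radial and integrable, $\int_{\mathbb{R}^d}\rho_n=1$, and $\lim_{n\to\infty}\int_{\mathbb{R}^d\setminus B(\mathbf{0},\delta)}\rho_n=0$ for every $\delta>0$. $\mathfrak{W}^{\rho,p}(\Omega;\mathbb{R}^d)=\{\mathbf{v}\in L^p(\Omega;\mathbb{R}^d):\int_\Omega\int_\Omega\rho(\mathbf{x}-\mathbf{y})\frac{|\mathbf{v}(\mathbf{x})-\mathbf{v}(\mathbf{y})|^p}{|\mathbf{x}-\mathbf{y}|^p}d\mathbf{y}d\mathbf{x}<\infty\}$; $\overline{F}_n(\mathbf{v},\Omega)=\int_\Omega\int_\Omega\rho_n(\mathbf{x}-\mathbf{y})\Phi\big(\big|\frac{|\mathbf{v}(\mathbf{x})-\mathbf{v}(\mathbf{y})|}{|\mathbf{x}-\mathbf{y}|}-1\big|\big)d\mathbf{y}d\mathbf{x}$ if $\mathbf{v}\in\mathfrak{W}^{\rho_n,p}(\Omega;\mathbb{R}^d)$ and $+\infty$ otherwise. $\mathcal{O}(d)=\{\mathbb{U}\in\mathbb{R}^{d\times d}:\mathbb{U}^T\mathbb{U}=\mathbb{I}\}$. *)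

theory Defs
  imports "HOL-Analysis.Analysis"
begin

definition lipschitz_domain :: "(real^'n) set \<Rightarrow> bool" where
  "lipschitz_domain \<Omega> \<longleftrightarrow> open \<Omega> \<and> connected \<Omega> \<and> \<Omega> \<noteq> {} \<and>
     (\<forall>x\<in>frontier \<Omega>. \<exists>r>0. \<exists>R::real^'n^'n. \<exists>k::'n. \<exists>g::real^'n \<Rightarrow> real. \<exists>L.
        orthogonal_matrix R \<and> L-lipschitz_on UNIV g \<and>
        (\<forall>z t. g (\<chi> i. if i = k then t else z $ i) = g z) \<and>
        \<Omega> \<inter> ball x r = {y \<in> ball x r. (R *v (y - x)) $ k < g (R *v (y - x))})"

definition Lp :: "real \<Rightarrow> (real^'n) set \<Rightarrow> (real^'n \<Rightarrow> 'b::euclidean_space) \<Rightarrow> bool" where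
  "Lp p \<Omega> v \<longleftrightarrow> v \<in> borel_measurable (lebesgue_on \<Omega>) \<and>
     integrable (lebesgue_on \<Omega>) (\<lambda>x. norm (v x) powr p)"

definition Lp_conv :: "real \<Rightarrow> (real^'n) set \<Rightarrow> (nat \<Rightarrow> real^'n \<Rightarrow> real^'n) \<Rightarrow> (real^'n \<Rightarrow> real^'n) \<Rightarrow> bool" where
  "Lp_conv p \<Omega> us u \<longleftrightarrow>
     (\<lambda>k. \<integral>\<^sup>+ x. ennreal (norm (us k x - u x) powr p) \<partial>lebesgue_on \<Omega>) \<longlonglongrightarrow> 0"

text \<open>Sequential Gamma-convergence in the strong L^p topology (L^p is metrizable).\<close>
definition gamma_conv_Lp ::
  "real \<Rightarrow> (real^'n) set \<Rightarrow> (nat \<Rightarrow> (real^'n \<Rightarrow> real^'n) \<Rightarrow> ereal) \<Rightarrow> ((real^'n \<Rightarrow> real^'n) \<Rightarrow> ereal) \<Rightarrow> bool" where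
  "gamma_conv_Lp p \<Omega> F Finf \<longleftrightarrow>
     (\<forall>u us. Lp p \<Omega> u \<and> (\<forall>k. Lp p \<Omega> (us k)) \<and> Lp_conv p \<Omega> us u \<longrightarrow>
         Finf u \<le> liminf (\<lambda>k. F k (us k))) \<and>
     (\<forall>u. Lp p \<Omega> u \<longrightarrow> (\<exists>us. (\<forall>k. Lp p \<Omega> (us k)) \<and> Lp_conv p \<Omega> us u \<and>
         limsup (\<lambda>k. F k (us k)) \<le> Finf u))"

definition pderiv_at :: "(real^'n \<Rightarrow> real) \<Rightarrow> 'n \<Rightarrow> real^'n \<Rightarrow> real" where
  "pderiv_at \<phi> j x = frechet_derivative \<phi> (at x) (axis j 1)"

fun Ck :: "nat \<Rightarrow> (real^'n \<Rightarrow> real) \<Rightarrow> bool" where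
  "Ck 0 \<phi> \<longleftrightarrow> continuous_on UNIV \<phi>"
| "Ck (Suc m) \<phi> \<longleftrightarrow> continuous_on UNIV \<phi> \<and> (\<forall>x. \<phi> differentiable (at x)) \<and>
      (\<forall>j. Ck m (pderiv_at \<phi> j))"

definition test_fun :: "(real^'n) set \<Rightarrow> (real^'n \<Rightarrow> real) \<Rightarrow> bool" where
  "test_fun \<Omega> \<phi> \<longleftrightarrow> (\<forall>m. Ck m \<phi>) \<and>
     compact (closure {x. \<phi> x \<noteq> 0}) \<and> closure {x. \<phi> x \<noteq> 0} \<subseteq> \<Omega>"

text \<open>G is a weak gradient of v on \<Omega>: (G x) $ i $ j is the weak derivative d_j v_i.\<close>
definition weak_gradient :: "(real^'n) set \<Rightarrow> (real^'n \<Rightarrow> real^'n) \<Rightarrow> (real^'n \<Rightarrow> real^'n^'n) \<Rightarrow> bool" where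
  "weak_gradient \<Omega> v G \<longleftrightarrow>
     (\<forall>i j. (\<lambda>x. G x $ i $ j) \<in> borel_measurable (lebesgue_on \<Omega>)) \<and>
     (\<forall>\<phi>. test_fun \<Omega> \<phi> \<longrightarrow> (\<forall>i j.
        integrable (lebesgue_on \<Omega>) (\<lambda>x. v x $ i * pderiv_at \<phi> j x) \<and>
        integrable (lebesgue_on \<Omega>) (\<lambda>x. G x $ i $ j * \<phi> x) \<and>
        (\<integral>x. v x $ i * pderiv_at \<phi> j x \<partial>lebesgue_on \<Omega>) =
          - (\<integral>x. G x $ i $ j * \<phi> x \<partial>lebesgue_on \<Omega>)))"

definition W1p :: "real \<Rightarrow> (real^'n) set \<Rightarrow> (real^'n \<Rightarrow> real^'n) \<Rightarrow> (real^'n \<Rightarrow> real^'n^'n) \<Rightarrow> bool" where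
  "W1p p \<Omega> v G \<longleftrightarrow> Lp p \<Omega> v \<and> Lp p \<Omega> G \<and> weak_gradient \<Omega> v G"

definition Wrho :: "(real^'n \<Rightarrow> real) \<Rightarrow> real \<Rightarrow> (real^'n) set \<Rightarrow> (real^'n \<Rightarrow> real^'n) \<Rightarrow> bool" where
  "Wrho \<rho> p \<Omega> v \<longleftrightarrow> Lp p \<Omega> v \<and>
     (\<integral>\<^sup>+ x. \<integral>\<^sup>+ y. ennreal (\<rho> (x - y) * (norm (v x - v y) / norm (x - y)) powr p)
        \<partial>lebesgue_on \<Omega> \<partial>lebesgue_on \<Omega>) < \<infinity>"

definition Fbar :: "(real \<Rightarrow> real) \<Rightarrow> (real^'n \<Rightarrow> real) \<Rightarrow> real \<Rightarrow> (real^'n \<Rightarrow> real^'n) \<Rightarrow> (real^'n) set \<Rightarrow> ereal" where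
  "Fbar \<Phi> \<rho> p v \<Omega> =
     (if Wrho \<rho> p \<Omega> v then
        enn2ereal (\<integral>\<^sup>+ x. \<integral>\<^sup>+ y. ennreal (\<rho> (x - y) *
            \<Phi> \<bar>norm (v x - v y) / norm (x - y) - 1\<bar>) \<partial>lebesgue_on \<Omega> \<partial>lebesgue_on \<Omega>)
      else \<infinity>)"

definition hypG :: "real \<Rightarrow> (real \<Rightarrow> real) \<Rightarrow> bool" where
  "hypG p \<Phi> \<longleftrightarrow> (\<forall>a\<ge>0. \<Phi> a \<ge> 0) \<and> mono_on {0..} \<Phi> \<and> convex_on {0..} \<Phi> \<and>
     (\<exists>C0>0. \<exists>C1>0. \<forall>a\<ge>0. C0 * (a powr p - 1) \<le> \<Phi> a \<and> \<Phi> a \<le> C1 * (1 + a powr p)) \<and>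
     (\<forall>a\<ge>0. \<Phi> a = 0 \<longleftrightarrow> a = 0)"

definition hypA :: "(nat \<Rightarrow> real^'n \<Rightarrow> real) \<Rightarrow> bool" where
  "hypA \<rho> \<longleftrightarrow> (\<forall>n.
       (\<forall>x. \<rho> n x \<ge> 0) \<and> (\<forall>x y. norm x = norm y \<longrightarrow> \<rho> n x = \<rho> n y) \<and>
       integrable lebesgue (\<rho> n) \<and> (\<integral>x. \<rho> n x \<partial>lebesgue) = 1) \<and>
     (\<forall>\<delta>>0. (\<lambda>n. \<integral>x. indicator (- ball 0 \<delta>) x * \<rho> n x \<partial>lebesgue) \<longlonglongrightarrow> 0)"

end

theory Submission
  imports Defs
begin

text \<open>The functionals \<open>Fbar\<close> depend on v only through the distances |v x - v y|, so they are
  invariant under v \<mapsto> U v for orthogonal U, and hence so is their Gamma-limit. The linear map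
  x \<mapsto> F x lies in W^{1,p} with constant weak gradient F (integrate by parts against test
  functions), so \<integral>_\<Omega> f_\<infinity>(U F) = F_\<infinity>(x \<mapsto> U F x) = F_\<infinity>(x \<mapsto> F x) = \<integral>_\<Omega> f_\<infinity>(F),
  and \<Omega> has positive measure.\<close>

lemma norm_orthogonal_matrix_mult:
  fixes U :: "real^'n^'n"
  assumes "orthogonal_matrix U"
  shows "norm (U *v x) = norm x"
  using assms by (simp add: orthogonal_transformation_matrix orthogonal_transformation_norm)

lemma Lp_orthogonal_compose:
  fixes U :: "real^'n^'n"
  assumes "orthogonal_matrix U" "Lp p \<Omega> v"
  shows "Lp p \<Omega> (\<lambda>x. U *v v x)"
proof -
  have "(\<lambda>y. U *v y) \<in> borel_measurable borel"
    by (intro borel_measurable_continuous_onI linear_continuous_on matrix_vector_mul_bounded_linear)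
  then have "(\<lambda>x. U *v v x) \<in> borel_measurable (lebesgue_on \<Omega>)"
    using measurable_compose assms(2) unfolding Lp_def by blast
  then show ?thesis
    using assms by (simp add: Lp_def norm_orthogonal_matrix_mult)
qed

lemma Lp_orthogonal_compose_iff:
  fixes U :: "real^'n^'n"
  assumes "orthogonal_matrix U"
  shows "Lp p \<Omega> (\<lambda>x. U *v v x) \<longleftrightarrow> Lp p \<Omega> v"
proof
  assume "Lp p \<Omega> (\<lambda>x. U *v v x)"
  then have "Lp p \<Omega> (\<lambda>x. transpose U *v (U *v v x))"
    using Lp_orthogonal_compose assms orthogonal_matrix_transpose by blast
  then show "Lp p \<Omega> v"
    using assms by (simp add: matrix_vector_mul_assoc orthogonal_matrix)
qed (use assms Lp_orthogonal_compose in blast)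

lemma norm_orthogonal_matrix_mult_diff:
  fixes U :: "real^'n^'n"
  assumes "orthogonal_matrix U"
  shows "norm (U *v x - U *v y) = norm (x - y)"
  by (metis assms norm_orthogonal_matrix_mult matrix_vector_mult_diff_distrib)

lemma Lp_conv_orthogonal_compose:
  fixes U :: "real^'n^'n"
  assumes "orthogonal_matrix U"
  shows "Lp_conv p \<Omega> (\<lambda>k x. U *v us k x) (\<lambda>x. U *v u x) \<longleftrightarrow> Lp_conv p \<Omega> us u"
  unfolding Lp_conv_def norm_orthogonal_matrix_mult_diff[OF assms] ..

lemma Fbar_orthogonal_compose:
  fixes U :: "real^'n^'n"
  assumes "orthogonal_matrix U"
  shows "Fbar \<Phi> \<rho> p (\<lambda>x. U *v v x) \<Omega> = Fbar \<Phi> \<rho> p v \<Omega>"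
  unfolding Fbar_def Wrho_def Lp_orthogonal_compose_iff[OF assms]
    norm_orthogonal_matrix_mult_diff[OF assms] ..

text \<open>The rotated recovery sequence of u is admissible in the liminf inequality at the rotated u.\<close>
lemma gamma_conv_Lp_orthogonal_compose_le:
  fixes U :: "real^'n^'n"
  assumes U: "orthogonal_matrix U"
    and \<Gamma>: "gamma_conv_Lp p \<Omega> F Finf"
    and F_inv: "\<And>k v. F k (\<lambda>x. U *v v x) = F k v"
    and u: "Lp p \<Omega> u"
  shows "Finf (\<lambda>x. U *v u x) \<le> Finf u"
proof -
  have lower: "\<And>v vs. \<lbrakk>Lp p \<Omega> v; \<forall>k. Lp p \<Omega> (vs k); Lp_conv p \<Omega> vs v\<rbrakk>
      \<Longrightarrow> Finf v \<le> liminf (\<lambda>k. F k (vs k))"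
    and recovery: "\<exists>us. (\<forall>k. Lp p \<Omega> (us k)) \<and> Lp_conv p \<Omega> us u \<and>
      limsup (\<lambda>k. F k (us k)) \<le> Finf u"
    using \<Gamma> u unfolding gamma_conv_Lp_def by blast+
  then obtain us where us: "\<forall>k. Lp p \<Omega> (us k)" "Lp_conv p \<Omega> us u"
      and limsup: "limsup (\<lambda>k. F k (us k)) \<le> Finf u"
    by blast
  have "Finf (\<lambda>x. U *v u x) \<le> liminf (\<lambda>k. F k (\<lambda>x. U *v us k x))"
    by (rule lower[OF Lp_orthogonal_compose[OF U u]])
      (simp_all add: U us Lp_orthogonal_compose Lp_conv_orthogonal_compose)
  also have "\<dots> = liminf (\<lambda>k. F k (us k))"
    by (simp add: F_inv)
  also have "\<dots> \<le> limsup (\<lambda>k. F k (us k))"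
    by (rule Liminf_le_Limsup) simp
  finally show ?thesis
    using limsup by (rule order_trans)
qed

lemma gamma_conv_Lp_orthogonal_compose:
  fixes U :: "real^'n^'n"
  assumes U: "orthogonal_matrix U"
    and \<Gamma>: "gamma_conv_Lp p \<Omega> F Finf"
    and F_inv: "\<And>V k v. orthogonal_matrix V \<Longrightarrow> F k (\<lambda>x. V *v v x) = F k v"
    and u: "Lp p \<Omega> u"
  shows "Finf (\<lambda>x. U *v u x) = Finf u"
proof (rule antisym)
  show "Finf (\<lambda>x. U *v u x) \<le> Finf u"
    using gamma_conv_Lp_orthogonal_compose_le[OF U \<Gamma> _ u] F_inv[OF U] by blast
  have UT: "orthogonal_matrix (transpose U)"
    using U by (simp add: orthogonal_matrix_transpose)
  have "Finf (\<lambda>x. transpose U *v (U *v u x)) \<le> Finf (\<lambda>x. U *v u x)"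
    by (rule gamma_conv_Lp_orthogonal_compose_le[OF UT \<Gamma> F_inv[OF UT] Lp_orthogonal_compose[OF U u]])
  then show "Finf u \<le> Finf (\<lambda>x. U *v u x)"
    using U by (simp add: matrix_vector_mul_assoc orthogonal_matrix)
qed

lemma integrable_continuous_compact_support:
  fixes f :: "'a::euclidean_space \<Rightarrow> real"
  assumes "continuous_on UNIV f" "compact K" "\<And>x. x \<notin> K \<Longrightarrow> f x = 0"
  shows "integrable lborel f"
proof -
  have "integrable lborel (\<lambda>x. indicator K x *\<^sub>R f x)"
    using borel_integrable_compact assms(1,2) continuous_on_subset by blast
  moreover have "(\<lambda>x. indicator K x *\<^sub>R f x) = f"
    using assms(3) by (intro ext) (auto simp: indicator_def)
  ultimately show ?thesis by simp
qed

lemma integrable_continuous_bounded_set: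
  fixes f :: "'a::euclidean_space \<Rightarrow> 'b::euclidean_space"
  assumes "continuous_on UNIV f" "bounded S" "S \<in> sets lebesgue"
  shows "integrable (lebesgue_on S) f"
proof -
  obtain a b where ab: "S \<subseteq> cbox a b"
    using assms(2) bounded_subset_cbox_symmetric by meson
  have "integrable (lebesgue_on (cbox a b)) f"
    using continuous_imp_integrable assms(1) continuous_on_subset by blast
  then have "set_integrable lebesgue (cbox a b) f"
    by (simp add: integrable_restrict_space set_integrable_def)
  then have "set_integrable lebesgue S f"
    by (rule set_integrable_subset) (use assms(3) ab in auto)
  then show ?thesis
    using assms(3) by (simp add: integrable_restrict_space set_integrable_def)
qed

lemma integral_lebesgue_on_eq_lborel:
  fixes f :: "'a::euclidean_space \<Rightarrow> real"
  assumes "S \<in> sets lebesgue" "f \<in> borel_measurable borel" "\<And>x. x \<notin> S \<Longrightarrow> f x = 0"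
  shows "integral\<^sup>L (lebesgue_on S) f = integral\<^sup>L lborel f"
proof -
  have "integral\<^sup>L (lebesgue_on S) f = integral\<^sup>L lebesgue (\<lambda>x. indicator S x *\<^sub>R f x)"
    using assms(1) by (simp add: integral_restrict_space)
  also have "(\<lambda>x. indicator S x *\<^sub>R f x) = f"
    using assms(3) by (intro ext) (auto simp: indicator_def)
  also have "integral\<^sup>L lebesgue f = integral\<^sup>L lborel f"
    using assms(2) by (simp add: integral_completion)
  finally show ?thesis .
qed

lemma lborel_integral_translate:
  fixes f :: "'a::euclidean_space \<Rightarrow> real"
  assumes "f \<in> borel_measurable borel"
  shows "integrable lborel (\<lambda>x. f (c + x)) \<longleftrightarrow> integrable lborel f"
    and "(\<integral>x. f (c + x) \<partial>lborel) = (\<integral>x. f x \<partial>lborel)"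
proof -
  have T: "(+) c \<in> measurable lborel borel" by simp
  show "integrable lborel (\<lambda>x. f (c + x)) \<longleftrightarrow> integrable lborel f"
    using integrable_distr_eq[OF T assms] by (simp add: lborel_distr_plus)
  show "(\<integral>x. f (c + x) \<partial>lborel) = (\<integral>x. f x \<partial>lborel)"
    using integral_distr[OF T assms] by (simp add: lborel_distr_plus)
qed

lemma has_derivative_zero_outside_support:
  fixes \<phi> :: "'a::real_normed_vector \<Rightarrow> real"
  assumes "(\<phi> has_derivative \<phi>') (at x)" "closed K" "x \<notin> K" "\<And>y. y \<notin> K \<Longrightarrow> \<phi> y = 0"
  shows "\<phi>' = (\<lambda>_. 0)"
proof -
  have "((\<lambda>_. 0) has_derivative \<phi>') (at x)"
    by (rule has_derivative_transform_within_open[OF assms(1), of "- K"]) (use assms in auto)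
  then show ?thesis
    using has_derivative_unique has_derivative_const by blast
qed

lemma has_real_derivative_along_line:
  fixes \<psi> :: "'a::real_normed_vector \<Rightarrow> real"
  assumes "\<And>x. (\<psi> has_derivative \<psi>' x) (at x)"
  shows "((\<lambda>t. \<psi> (x + t *\<^sub>R e)) has_real_derivative \<psi>' (x + t *\<^sub>R e) e) (at t)"
proof -
  have "((\<lambda>t. x + t *\<^sub>R e) has_derivative (\<lambda>s. s *\<^sub>R e)) (at t)"
    by (auto intro!: derivative_eq_intros)
  then have "((\<lambda>t. \<psi> (x + t *\<^sub>R e)) has_derivative (\<lambda>s. \<psi>' (x + t *\<^sub>R e) (s *\<^sub>R e))) (at t)"
    using has_derivative_compose assms by blast
  moreover have "linear (\<psi>' (x + t *\<^sub>R e))"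
    using assms has_derivative_linear by blast
  then have "(\<lambda>s. \<psi>' (x + t *\<^sub>R e) (s *\<^sub>R e)) = (*) (\<psi>' (x + t *\<^sub>R e) e)"
    by (simp add: fun_eq_iff linear_scale)
  ultimately show ?thesis
    by (simp add: has_field_derivative_def)
qed

lemma difference_quotient_bounded:
  fixes \<psi> :: "'a::real_normed_vector \<Rightarrow> real"
  assumes "\<And>x. (\<psi> has_derivative \<psi>' x) (at x)" "\<And>y. \<bar>\<psi>' y e\<bar> \<le> M" "h > 0"
  shows "\<bar>(\<psi> (x + h *\<^sub>R e) - \<psi> x) / h\<bar> \<le> M"
proof -
  obtain t where "\<psi> (x + h *\<^sub>R e) - \<psi> (x + 0 *\<^sub>R e) = (h - 0) * \<psi>' (x + t *\<^sub>R e) e"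
    using MVT2[of 0 h "\<lambda>t. \<psi> (x + t *\<^sub>R e)" "\<lambda>t. \<psi>' (x + t *\<^sub>R e) e"]
      has_real_derivative_along_line[OF assms(1)] assms(3) by blast
  then show ?thesis
    using assms(2,3) by simp
qed

lemma difference_quotient_tendsto:
  fixes \<psi> :: "'a::real_normed_vector \<Rightarrow> real"
  assumes "\<And>x. (\<psi> has_derivative \<psi>' x) (at x)" "filterlim h (at 0) F"
  shows "((\<lambda>n. (\<psi> (x + h n *\<^sub>R e) - \<psi> x) / h n) \<longlongrightarrow> \<psi>' x e) F"
proof -
  have "((\<lambda>t. (\<psi> (x + t *\<^sub>R e) - \<psi> (x + 0 *\<^sub>R e)) / (t - 0)) \<longlongrightarrow> \<psi>' (x + 0 *\<^sub>R e) e) (at 0)"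
    using has_real_derivative_along_line[OF assms(1), where t=0] unfolding has_field_derivative_iff .
  then show ?thesis
    using filterlim_compose[OF _ assms(2)] by (simp add: o_def)
qed

text \<open>The difference quotients of \<psi> in direction e integrate to 0 by translation invariance
  and converge dominatedly to the directional derivative.\<close>
lemma lborel_integral_directional_derivative_eq_0:
  fixes \<psi> :: "'a::euclidean_space \<Rightarrow> real"
  assumes d: "\<And>x. (\<psi> has_derivative \<psi>' x) (at x)"
    and c: "continuous_on UNIV (\<lambda>x. \<psi>' x e)"
    and K: "compact K" and z: "\<And>x. x \<notin> K \<Longrightarrow> \<psi> x = 0"
  shows "(\<integral>x. \<psi>' x e \<partial>lborel) = 0"
proof -
  have D_zero: "\<psi>' x e = 0" if "x \<notin> K" for x
    using has_derivative_zero_outside_support[OF d compact_imp_closed[OF K] that z] by simp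
  obtain M where "M > 0" and M: "\<And>x. x \<in> K \<Longrightarrow> \<bar>\<psi>' x e\<bar> \<le> M"
    using compact_imp_bounded[OF compact_continuous_image[OF continuous_on_subset[OF c] K]]
    by (auto simp: bounded_pos)
  then have D_bound: "\<bar>\<psi>' x e\<bar> \<le> M" for x
    using D_zero by (cases "x \<in> K") auto
  obtain R where R: "\<And>x. x \<in> K \<Longrightarrow> norm x \<le> R"
    using compact_imp_bounded[OF K] by (auto simp: bounded_pos)
  have \<psi>_cont: "continuous_on UNIV \<psi>"
    using d has_derivative_continuous continuous_at_imp_continuous_on by blast
  then have \<psi>_meas[measurable]: "\<psi> \<in> borel_measurable borel"
    using borel_measurable_continuous_onI by blast
  have \<psi>_int: "integrable lborel \<psi>"
    using integrable_continuous_compact_support[OF \<psi>_cont K z] .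
  define h :: "nat \<Rightarrow> real" where "h n = inverse (real (Suc n))" for n
  have h_pos: "h n > 0" and h_le: "h n \<le> 1" for n
    by (simp_all add: h_def inverse_le_1_iff)
  have h_lim: "filterlim h (at 0) sequentially"
    unfolding h_def filterlim_at using LIMSEQ_inverse_real_of_nat by auto
  define s where "s n x = (\<psi> (x + h n *\<^sub>R e) - \<psi> x) / h n" for n x
  have s_zero: "s n x = 0" if "x \<notin> cball 0 (R + norm e)" for n x
  proof -
    have "norm (h n *\<^sub>R e) \<le> norm e"
      using h_pos[of n] h_le[of n] by (simp add: mult_left_le_one_le)
    moreover have "R + norm e < norm x"
      using that by simp
    ultimately have "norm (x + h n *\<^sub>R e) > R" "norm x > R"
      using norm_diff_ineq[of x "h n *\<^sub>R e"] norm_ge_zero[of e] by linarith+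
    then show ?thesis
      using R z by (metis s_def diff_self div_0 not_le)
  qed
  have "(\<lambda>n. integral\<^sup>L lborel (s n)) \<longlonglongrightarrow> (\<integral>x. \<psi>' x e \<partial>lborel)"
  proof (rule integral_dominated_convergence[where w="\<lambda>x. M * indicator (cball 0 (R + norm e)) x"])
    show "(\<lambda>x. \<psi>' x e) \<in> borel_measurable lborel"
      using c borel_measurable_continuous_onI by simp
    show "s n \<in> borel_measurable lborel" for n
      unfolding s_def by measurable
    show "integrable lborel (\<lambda>x. M * indicator (cball 0 (R + norm e)) x)"
      by (intro integrable_mult_right integrable_real_indicator) (use emeasure_lborel_cball_finite in \<open>auto simp: top_unique\<close>)
    show "AE x in lborel. norm (s n x) \<le> M * indicator (cball 0 (R + norm e)) x" for n
      using s_zero difference_quotient_bounded[OF d D_bound h_pos]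
      by (auto simp: s_def indicator_def)
    show "AE x in lborel. (\<lambda>n. s n x) \<longlonglongrightarrow> \<psi>' x e"
      unfolding s_def using difference_quotient_tendsto[OF d h_lim] by simp
  qed
  moreover have "integral\<^sup>L lborel (s n) = 0" for n
  proof -
    have "s n = (\<lambda>x. (\<psi> (h n *\<^sub>R e + x) - \<psi> x) / h n)"
      by (simp add: fun_eq_iff s_def add.commute)
    moreover have "integrable lborel (\<lambda>x. \<psi> (h n *\<^sub>R e + x))"
      using \<psi>_int lborel_integral_translate(1)[OF \<psi>_meas] by blast
    ultimately show ?thesis
      using \<psi>_int lborel_integral_translate(2)[OF \<psi>_meas] by simp
  qed
  ultimately have "(\<lambda>n. 0) \<longlonglongrightarrow> (\<integral>x. \<psi>' x e \<partial>lborel)"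
    by simp
  then show ?thesis
    using LIMSEQ_unique tendsto_const by blast
qed

lemma Lp_continuous_bounded:
  fixes v :: "real^'n \<Rightarrow> 'b::euclidean_space"
  assumes "continuous_on UNIV v" "bounded \<Omega>" "\<Omega> \<in> sets lebesgue" "p > 0"
  shows "Lp p \<Omega> v"
  unfolding Lp_def
proof
  show "v \<in> borel_measurable (lebesgue_on \<Omega>)"
    using continuous_imp_measurable_on_sets_lebesgue continuous_on_subset assms(1,3) by blast
  show "integrable (lebesgue_on \<Omega>) (\<lambda>x. norm (v x) powr p)"
    by (rule integrable_continuous_bounded_set[OF _ assms(2,3)], rule continuous_on_powr')
      (use assms(1,4) in \<open>auto intro!: continuous_intros\<close>)
qed

lemma pderiv_at_zero_outside_support:
  assumes "Ck (Suc 0) \<phi>" "closed K" "\<And>x. x \<notin> K \<Longrightarrow> \<phi> x = 0" "x \<notin> K"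
  shows "pderiv_at \<phi> j x = 0"
proof -
  have "(\<phi> has_derivative frechet_derivative \<phi> (at x)) (at x)"
    using assms(1) by (simp flip: frechet_derivative_works)
  then have "frechet_derivative \<phi> (at x) = (\<lambda>_. 0)"
    by (rule has_derivative_zero_outside_support[OF _ assms(2,4,3)])
  then show ?thesis
    by (simp add: pderiv_at_def)
qed

text \<open>The product of (A x)_i with \<phi> has compact support, so its j-th partial derivative
  integrates to 0.\<close>
lemma lborel_integral_linear_mult_pderiv:
  fixes A :: "real^'n^'n" and \<phi> :: "real^'n \<Rightarrow> real"
  assumes \<phi>: "Ck (Suc 0) \<phi>" and K: "compact K" and z: "\<And>x. x \<notin> K \<Longrightarrow> \<phi> x = 0"
  shows "(\<integral>x. (A *v x) $ i * pderiv_at \<phi> j x \<partial>lborel) = - (\<integral>x. A $ i $ j * \<phi> x \<partial>lborel)"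
proof -
  define a where "a x = (A *v x) $ i" for x
  have a_linear: "bounded_linear a"
    unfolding a_def
    using bounded_linear_compose[OF bounded_linear_vec_nth matrix_vector_mul_bounded_linear] by blast
  have a_axis: "a (axis j 1) = A $ i $ j"
    by (simp add: a_def matrix_vector_mult_basis column_def)
  have \<phi>_cont: "continuous_on UNIV \<phi>" and \<phi>'_cont: "continuous_on UNIV (pderiv_at \<phi> j)"
    using \<phi> by auto
  define \<phi>' where "\<phi>' x = frechet_derivative \<phi> (at x)" for x
  have \<phi>_deriv: "(\<phi> has_derivative \<phi>' x) (at x)" for x
    using \<phi> by (simp add: \<phi>'_def flip: frechet_derivative_works)
  define \<psi>' where "\<psi>' x h = a x * \<phi>' x h + a h * \<phi> x" for x h
  have \<psi>_deriv: "((\<lambda>x. a x * \<phi> x) has_derivative \<psi>' x) (at x)" for x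
    unfolding \<psi>'_def[abs_def]
    using has_derivative_mult[OF bounded_linear_imp_has_derivative[OF a_linear] \<phi>_deriv] by simp
  have \<psi>'_axis: "\<psi>' x (axis j 1) = a x * pderiv_at \<phi> j x + A $ i $ j * \<phi> x" for x
    by (simp add: \<psi>'_def a_axis pderiv_at_def \<phi>'_def)
  have cont1: "continuous_on UNIV (\<lambda>x. a x * pderiv_at \<phi> j x)"
    by (rule continuous_on_mult[OF linear_continuous_on[OF a_linear] \<phi>'_cont])
  have cont2: "continuous_on UNIV (\<lambda>x. A $ i $ j * \<phi> x)"
    by (rule continuous_on_mult[OF continuous_on_const \<phi>_cont])
  have int1: "integrable lborel (\<lambda>x. a x * pderiv_at \<phi> j x)"
    by (rule integrable_continuous_compact_support[OF cont1 K])
      (simp add: pderiv_at_zero_outside_support[OF \<phi> compact_imp_closed[OF K] z])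
  have int2: "integrable lborel (\<lambda>x. A $ i $ j * \<phi> x)"
    by (rule integrable_continuous_compact_support[OF cont2 K]) (simp add: z)
  have "(\<integral>x. \<psi>' x (axis j 1) \<partial>lborel) = 0"
    by (rule lborel_integral_directional_derivative_eq_0[OF \<psi>_deriv _ K])
      (use cont1 cont2 z in \<open>simp_all add: \<psi>'_axis continuous_on_add\<close>)
  then show ?thesis
    using int1 int2 by (simp add: \<psi>'_axis a_def)
qed

lemma weak_gradient_linear:
  fixes A :: "real^'n^'n"
  assumes \<Omega>: "\<Omega> \<in> sets lebesgue" "bounded \<Omega>"
  shows "weak_gradient \<Omega> (\<lambda>x. A *v x) (\<lambda>x. A)"
  unfolding weak_gradient_def
proof (rule conjI; intro allI impI)
  fix \<phi> :: "real^'n \<Rightarrow> real" and i j :: 'n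
  assume "test_fun \<Omega> \<phi>"
  define K where "K = closure {x. \<phi> x \<noteq> 0}"
  have \<phi>: "Ck (Suc 0) \<phi>" and K: "compact K" "K \<subseteq> \<Omega>"
    using \<open>test_fun \<Omega> \<phi>\<close> unfolding test_fun_def K_def by blast+
  have z: "\<phi> x = 0" if "x \<notin> K" for x
    using that closure_subset[of "{x. \<phi> x \<noteq> 0}"] unfolding K_def by blast
  have z': "pderiv_at \<phi> j x = 0" if "x \<notin> K" for x
    using pderiv_at_zero_outside_support[OF \<phi> compact_imp_closed[OF K(1)] z that] .
  have "continuous_on UNIV (\<lambda>x. (A *v x) $ i)"
    by (intro linear_continuous_on
        bounded_linear_compose[OF bounded_linear_vec_nth matrix_vector_mul_bounded_linear])
  moreover have "continuous_on UNIV (pderiv_at \<phi> j)" "continuous_on UNIV \<phi>"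
    using \<phi> by simp_all
  ultimately have cont1: "continuous_on UNIV (\<lambda>x. (A *v x) $ i * pderiv_at \<phi> j x)"
    and cont2: "continuous_on UNIV (\<lambda>x. A $ i $ j * \<phi> x)"
    by (auto intro: continuous_on_mult continuous_on_const)
  have "(\<integral>x. (A *v x) $ i * pderiv_at \<phi> j x \<partial>lebesgue_on \<Omega>)
      = (\<integral>x. (A *v x) $ i * pderiv_at \<phi> j x \<partial>lborel)"
    by (rule integral_lebesgue_on_eq_lborel[OF \<Omega>(1)])
      (use cont1 z' K(2) in \<open>auto intro: borel_measurable_continuous_onI\<close>)
  also have "\<dots> = - (\<integral>x. A $ i $ j * \<phi> x \<partial>lborel)"
    using lborel_integral_linear_mult_pderiv[OF \<phi> K(1) z] .
  also have "(\<integral>x. A $ i $ j * \<phi> x \<partial>lborel) = (\<integral>x. A $ i $ j * \<phi> x \<partial>lebesgue_on \<Omega>)"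
    by (rule integral_lebesgue_on_eq_lborel[OF \<Omega>(1), symmetric])
      (use cont2 z K(2) in \<open>auto intro: borel_measurable_continuous_onI\<close>)
  finally show "integrable (lebesgue_on \<Omega>) (\<lambda>x. (A *v x) $ i * pderiv_at \<phi> j x) \<and>
      integrable (lebesgue_on \<Omega>) (\<lambda>x. A $ i $ j * \<phi> x) \<and>
      (\<integral>x. (A *v x) $ i * pderiv_at \<phi> j x \<partial>lebesgue_on \<Omega>) =
        - (\<integral>x. A $ i $ j * \<phi> x \<partial>lebesgue_on \<Omega>)"
    using integrable_continuous_bounded_set[OF _ \<Omega>(2,1)] cont1 cont2 by blast
qed simp

lemma W1p_linear:
  fixes A :: "real^'n^'n"
  assumes "\<Omega> \<in> sets lebesgue" "bounded \<Omega>" "p > 0"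
  shows "W1p p \<Omega> (\<lambda>x. A *v x) (\<lambda>x. A)"
  unfolding W1p_def using assms
  by (simp add: weak_gradient_linear Lp_continuous_bounded linear_continuous_on
      matrix_vector_mul_bounded_linear)

lemma measure_lebesgue_open_pos:
  fixes S :: "'a::euclidean_space set"
  assumes "open S" "S \<noteq> {}" "bounded S"
  shows "0 < measure lebesgue S"
proof -
  obtain x e where "e > 0" "ball x e \<subseteq> S"
    using assms(1,2) open_contains_ball by blast
  moreover have "S \<in> lmeasurable"
    using assms(1,3) by (simp add: bounded_set_imp_lmeasurable)
  ultimately have "measure lebesgue (ball x e) \<le> measure lebesgue S"
    by (intro measure_mono_fmeasurable) auto
  moreover have "0 < measure lebesgue (ball x e)"
    using content_ball_pos[OF \<open>e > 0\<close>] by simp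
  ultimately show ?thesis
    by linarith
qed

theorem theorem5p3:
  fixes \<Omega> :: "(real^'n) set" and p :: real and \<Phi> :: "real \<Rightarrow> real"
    and \<rho> :: "nat \<Rightarrow> real^'n \<Rightarrow> real" and r :: "nat \<Rightarrow> nat"
    and Finf :: "(real^'n \<Rightarrow> real^'n) \<Rightarrow> ereal" and finf :: "real^'n^'n \<Rightarrow> real"
  assumes "lipschitz_domain \<Omega>" and "bounded \<Omega>"
    and "1 < p"
    and "hypG p \<Phi>"
    and "hypA \<rho>"
    and "strict_mono r"
    and "gamma_conv_Lp p \<Omega> (\<lambda>k v. Fbar \<Phi> (\<rho> (r k)) p v \<Omega>) Finf"
    and "continuous_on UNIV finf"
    and "\<And>v G. W1p p \<Omega> v G \<Longrightarrow>
           integrable (lebesgue_on \<Omega>) (\<lambda>x. finf (G x)) \<and>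
           Finf v = ereal (\<integral>x. finf (G x) \<partial>lebesgue_on \<Omega>)"
  shows "\<forall>F U. orthogonal_matrix U \<longrightarrow> finf (U ** F) = finf F"
proof (intro allI impI)
  fix F U :: "real^'n^'n"
  assume U: "orthogonal_matrix U"
  have "open \<Omega>" "\<Omega> \<noteq> {}"
    using assms(1) by (auto simp: lipschitz_domain_def)
  then have \<Omega>_meas: "\<Omega> \<in> sets lebesgue"
    by simp
  have W1p: "W1p p \<Omega> (\<lambda>x. A *v x) (\<lambda>x. A)" for A :: "real^'n^'n"
    using W1p_linear[OF \<Omega>_meas assms(2)] assms(3) by simp
  have "Finf (\<lambda>x. U *v (F *v x)) = Finf (\<lambda>x. F *v x)"
    using gamma_conv_Lp_orthogonal_compose[OF U assms(7) Fbar_orthogonal_compose] W1p[of F]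
    by (simp add: W1p_def)
  then have "(\<integral>x. finf (U ** F) \<partial>lebesgue_on \<Omega>) = (\<integral>x. finf F \<partial>lebesgue_on \<Omega>)"
    using assms(9)[OF W1p[of F]] assms(9)[OF W1p[of "U ** F"]]
    by (simp add: matrix_vector_mul_assoc)
  then have "measure lebesgue \<Omega> * finf (U ** F) = measure lebesgue \<Omega> * finf F"
    using \<Omega>_meas by (simp add: measure_restrict_space space_restrict_space)
  then show "finf (U ** F) = finf F"
    using measure_lebesgue_open_pos[OF \<open>open \<Omega>\<close> \<open>\<Omega> \<noteq> {}\<close> assms(2)] by simp
qed

end
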